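(* Let $T$ be a tree with colour classes $A$ and $B$ such that $a=|A|\le|B|$ and $k=\min\{d_T(x):x\in A\}\ge 2$. Let $\tilde T\in\mathcal{H}(T)$ be obtained from $T$ by a vertex split on a set $U\subseteq V(T)$, and let $S=U\cap A$ be the set of splitting vertices in $A$, $s=|S|$. If $s\ge 1$, then $\nu(\tilde T)\ge a-1+k$.
   Context: $\nu(G)$ is the matching number. A vertex split on a vertex $v$ of $H$ replaces $v$ by an independent set of $d(v)$ new vertices, each adjacent to exactly one vertex of $N_H(v)$, distinct new vertices adjacent to distinct neighbours; a vertex split on $U\subseteq V(H)$ applies this to the vertices of $U$ one by one. The splitting family $\mathcal{H}(H)$ is the family of all graphs obtained from $H$ by a vertex split on some $U\subseteq V(H)$. *)

theory Defs
  imports Main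
begin

definition simple_graph :: "'a set \<Rightarrow> 'a set set \<Rightarrow> bool" where
  "simple_graph V E \<longleftrightarrow> finite V \<and>
     (\<forall>e\<in>E. \<exists>x y. x \<noteq> y \<and> x \<in> V \<and> y \<in> V \<and> e = {x, y})"

definition degree :: "'a set set \<Rightarrow> 'a \<Rightarrow> nat" where
  "degree E x = card {y. {x, y} \<in> E}"

definition adj_rel :: "'a set set \<Rightarrow> ('a \<times> 'a) set" where
  "adj_rel E = {(x, y). {x, y} \<in> E}"

definition connected_graph :: "'a set \<Rightarrow> 'a set set \<Rightarrow> bool" where
  "connected_graph V E \<longleftrightarrow> V \<noteq> {} \<and> (\<forall>x\<in>V. \<forall>y\<in>V. (x, y) \<in> (adj_rel E)\<^sup>*)"

definition is_cycle :: "'a set set \<Rightarrow> 'a list \<Rightarrow> bool" where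
  "is_cycle E cs \<longleftrightarrow> length cs \<ge> 3 \<and> distinct cs \<and>
     (\<forall>i. Suc i < length cs \<longrightarrow> {cs ! i, cs ! Suc i} \<in> E) \<and>
     {last cs, hd cs} \<in> E"

definition is_tree :: "'a set \<Rightarrow> 'a set set \<Rightarrow> bool" where
  "is_tree V E \<longleftrightarrow> simple_graph V E \<and> connected_graph V E \<and> (\<nexists>cs. is_cycle E cs)"

definition colour_classes :: "'a set \<Rightarrow> 'a set set \<Rightarrow> 'a set \<Rightarrow> 'a set \<Rightarrow> bool" where
  "colour_classes V E A B \<longleftrightarrow> A \<union> B = V \<and> A \<inter> B = {} \<and>
     (\<forall>x y. {x, y} \<in> E \<longrightarrow> (x \<in> A \<and> y \<in> B) \<or> (x \<in> B \<and> y \<in> A))"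

definition is_matching :: "'a set set \<Rightarrow> 'a set set \<Rightarrow> bool" where
  "is_matching E M \<longleftrightarrow> M \<subseteq> E \<and> (\<forall>e1\<in>M. \<forall>e2\<in>M. e1 \<noteq> e2 \<longrightarrow> e1 \<inter> e2 = {})"

definition matching_number :: "'a set set \<Rightarrow> nat" where
  "matching_number E = Max {card M | M. is_matching E M}"

text \<open>A vertex x not in U is kept as (x, None); a vertex x in U
  is replaced by the new vertices (x, Some y), one for each neighbour y of x, where
  (x, Some y) is adjacent only to (the copy of) y. Splitting the vertices of U one by
  one yields exactly this graph (up to isomorphism), independently of the order.\<close>
definition split_vertex :: "'a set \<Rightarrow> 'a \<Rightarrow> 'a \<Rightarrow> 'a \<times> 'a option" where
  "split_vertex U x y = (x, if x \<in> U then Some y else None)"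

definition split_V :: "'a set \<Rightarrow> 'a set set \<Rightarrow> 'a set \<Rightarrow> ('a \<times> 'a option) set" where
  "split_V V E U = {(x, None) | x. x \<in> V \<and> x \<notin> U} \<union> {(x, Some y) | x y. x \<in> U \<and> {x, y} \<in> E}"

definition split_E :: "'a set set \<Rightarrow> 'a set \<Rightarrow> ('a \<times> 'a option) set set" where
  "split_E E U = {{split_vertex U x y, split_vertex U y x} | x y. {x, y} \<in> E}"

end

theory Submission
  imports Defs
begin

(*
  Root the tree at a split vertex v in A. A vertex has at most one neighbour closer to v, since
  two such neighbours would close a cycle; hence every x in A - {v}, having degree at least 2, has a
  child c(x), and distinct vertices have distinct children. As A is independent, the edges x c(x)
  for x in A - {v} and the d(v) edges at v pairwise meet only in v. Splitting v separates the edges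
  at v, so the images of all these edges form a matching of size |A| - 1 + d(v) >= |A| - 1 + k in
  the split tree.
*)

definition is_path :: "'a set set \<Rightarrow> 'a list \<Rightarrow> bool" where
  "is_path E ps \<longleftrightarrow> distinct ps \<and> successively (\<lambda>x y. {x, y} \<in> E) ps"

lemma is_cycle_iff_path:
  "is_cycle E cs \<longleftrightarrow> is_path E cs \<and> 3 \<le> length cs \<and> {last cs, hd cs} \<in> E"
  unfolding is_cycle_def is_path_def successively_conv_nth by blast

lemma simple_graph_edgeD:
  assumes "simple_graph V E" and "{x, y} \<in> E"
  shows "x \<in> V" and "y \<in> V" and "x \<noteq> y"
  using assms unfolding simple_graph_def by (auto simp: doubleton_eq_iff)

lemma simple_graph_edgeE:
  assumes "simple_graph V E" and "e \<in> E"
  obtains x y where "e = {x, y}" and "x \<noteq> y" and "x \<in> V" and "y \<in> V"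
  using assms unfolding simple_graph_def by (metis (no_types))

lemma two_neighbours:
  assumes "2 \<le> degree E x"
  obtains y z where "{x, y} \<in> E" and "{x, z} \<in> E" and "y \<noteq> z"
proof -
  let ?N = "{y. {x, y} \<in> E}"
  have "finite ?N" and "\<not> card ?N \<le> Suc 0"
    using assms unfolding degree_def by (auto intro: card_ge_0_finite)
  then obtain y z where "y \<in> ?N" and "z \<in> ?N" and "y \<noteq> z"
    using card_le_Suc0_iff_eq by blast
  then show ?thesis
    using that by blast
qed

locale rooted_tree =
  fixes V :: "'a set" and E :: "'a set set" and r :: 'a
  assumes tree: "is_tree V E" and root_in_V: "r \<in> V"
begin

lemma simple: "simple_graph V E"
  using tree unfolding is_tree_def by blast

lemma acyclic: "\<not> is_cycle E cs"
  using tree unfolding is_tree_def by blast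

definition depth :: "'a \<Rightarrow> nat" where
  "depth x = (LEAST n. (r, x) \<in> adj_rel E ^^ n)"

lemma walk_of_length_depth: "x \<in> V \<Longrightarrow> (r, x) \<in> adj_rel E ^^ depth x"
proof -
  assume "x \<in> V"
  then have "(r, x) \<in> (adj_rel E)\<^sup>*"
    using tree root_in_V unfolding is_tree_def connected_graph_def by blast
  then show ?thesis
    unfolding depth_def rtrancl_power by (rule LeastI_ex)
qed

lemma depth_le: "(r, x) \<in> adj_rel E ^^ n \<Longrightarrow> depth x \<le> n"
  unfolding depth_def by (rule Least_le)

lemma depth_eq_0_iff: "x \<in> V \<Longrightarrow> depth x = 0 \<longleftrightarrow> x = r"
  using walk_of_length_depth depth_le[of r 0] by fastforce

lemma depth_edge_le: "{x, y} \<in> E \<Longrightarrow> depth y \<le> Suc (depth x)"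
proof -
  assume "{x, y} \<in> E"
  then have "x \<in> V" and "(x, y) \<in> adj_rel E"
    using simple_graph_edgeD[OF simple] unfolding adj_rel_def by auto
  then show ?thesis
    using depth_le[OF relpow_Suc_I[OF walk_of_length_depth]] by blast
qed

lemma parent_exists:
  assumes "x \<in> V" and "x \<noteq> r"
  obtains p where "{p, x} \<in> E" and "depth x = Suc (depth p)"
proof -
  obtain n where n: "depth x = Suc n"
    using assms depth_eq_0_iff not0_implies_Suc by blast
  then have "(r, x) \<in> adj_rel E ^^ Suc n"
    using walk_of_length_depth[OF \<open>x \<in> V\<close>] by simp
  then obtain p where p: "(r, p) \<in> adj_rel E ^^ n" and "(p, x) \<in> adj_rel E"
    by (rule relpow_Suc_E)
  then have "{p, x} \<in> E"
    unfolding adj_rel_def by simp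
  moreover have "depth x = Suc (depth p)"
    using depth_le[OF p] depth_edge_le[OF \<open>{p, x} \<in> E\<close>] n by simp
  ultimately show ?thesis
    by (rule that)
qed

lemma path_between_equal_depth:
  assumes "p \<in> V" and "q \<in> V" and "p \<noteq> q" and "depth p = depth q"
  shows "\<exists>ps. is_path E ps \<and> hd ps = p \<and> last ps = q \<and> 3 \<le> length ps \<and>
    (\<forall>z\<in>set ps. depth z \<le> depth p)"
  using assms
proof (induction "depth p" arbitrary: p q)
  \<comment> \<open>replace both vertices by their parents until the two parent chains meet\<close>
  case 0
  then show ?case
    using depth_eq_0_iff by metis
next
  case (Suc n)
  then have "p \<noteq> r" and "q \<noteq> r"
    using depth_eq_0_iff[of p] depth_eq_0_iff[of q] by auto
  obtain p' where p': "{p', p} \<in> E" "depth p = Suc (depth p')"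
    using parent_exists \<open>p \<in> V\<close> \<open>p \<noteq> r\<close> by blast
  obtain q' where q': "{q', q} \<in> E" "depth q = Suc (depth q')"
    using parent_exists \<open>q \<in> V\<close> \<open>q \<noteq> r\<close> by blast
  have "p' \<in> V" and "q' \<in> V"
    using p' q' simple_graph_edgeD[OF simple] by blast+
  show ?case
  proof (cases "p' = q'")
    case True
    have "{p, p'} \<in> E"
      using p'(1) by (simp add: insert_commute)
    moreover have "p \<noteq> p'" and "p' \<noteq> q"
      using p'(2) q'(2) True Suc.prems(4) by auto
    ultimately have "is_path E [p, p', q]"
      using True q'(1) Suc.prems(3) by (simp add: is_path_def)
    then show ?thesis
      using p' q' True Suc.prems(4) by (intro exI[of _ "[p, p', q]"]) simp
  next
    case False
    moreover have "n = depth p'" and "depth p' = depth q'"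
      using Suc.hyps(2) Suc.prems(4) p'(2) q'(2) by simp_all
    ultimately obtain ps where ps: "is_path E ps" "hd ps = p'" "last ps = q'" "3 \<le> length ps"
      and ps_depth: "\<forall>z\<in>set ps. depth z \<le> depth p'"
      using Suc.hyps(1) \<open>p' \<in> V\<close> \<open>q' \<in> V\<close> by blast
    have "p \<notin> set ps" and "q \<notin> set ps"
      using ps_depth p' q' Suc.prems(4) by (metis Suc_n_not_le_n)+
    moreover have "ps \<noteq> []"
      using ps by auto
    moreover have "{p, p'} \<in> E"
      using p'(1) by (simp add: insert_commute)
    ultimately have "is_path E (p # ps @ [q])"
      using ps q'(1) Suc.prems(3)
      by (auto simp: is_path_def successively_append_iff successively_Cons)
    then show ?thesis
      using ps ps_depth p'(2) \<open>ps \<noteq> []\<close> Suc.prems(4) by (intro exI[of _ "p # ps @ [q]"]) auto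
  qed
qed

lemma depth_adjacent:
  assumes "{x, y} \<in> E"
  shows "depth y = Suc (depth x) \<or> depth x = Suc (depth y)"
proof -
  have "{y, x} \<in> E"
    using assms by (simp add: insert_commute)
  have "depth x \<noteq> depth y"
  proof
    assume "depth x = depth y"
    then obtain ps where "is_path E ps" "hd ps = x" "last ps = y" "3 \<le> length ps"
      using path_between_equal_depth simple_graph_edgeD[OF simple assms] by blast
    then have "is_cycle E ps"
      using \<open>{y, x} \<in> E\<close> by (simp add: is_cycle_iff_path)
    then show False
      using acyclic by blast
  qed
  moreover have "depth y \<le> Suc (depth x)" and "depth x \<le> Suc (depth y)"
    using depth_edge_le assms \<open>{y, x} \<in> E\<close> by blast+
  ultimately show ?thesis
    by linarith
qed

lemma parent_unique:
  assumes "{p, x} \<in> E" and "{q, x} \<in> E"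
    and "depth x = Suc (depth p)" and "depth x = Suc (depth q)"
  shows "p = q"
proof (rule ccontr)
  assume "p \<noteq> q"
  moreover have "p \<in> V" and "q \<in> V"
    using assms simple_graph_edgeD[OF simple] by blast+
  moreover have "depth p = depth q"
    using assms by simp
  ultimately obtain ps where ps: "is_path E ps" "hd ps = p" "last ps = q" "3 \<le> length ps"
    and ps_depth: "\<forall>z\<in>set ps. depth z \<le> depth p"
    using path_between_equal_depth by blast
  have "x \<notin> set ps"
    using ps_depth assms by fastforce
  moreover have "ps \<noteq> []"
    using ps by auto
  moreover have "{x, p} \<in> E"
    using assms(1) by (simp add: insert_commute)
  ultimately have "is_cycle E (ps @ [x])"
    using ps assms(2)
    by (auto simp: is_cycle_iff_path is_path_def successively_append_iff)
  then show False
    using acyclic by blast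
qed

lemma child_exists:
  assumes "2 \<le> degree E x"
  shows "\<exists>y. {x, y} \<in> E \<and> depth y = Suc (depth x)"
proof -
  obtain y z where yz: "{x, y} \<in> E" "{x, z} \<in> E" "y \<noteq> z"
    using two_neighbours[OF assms] .
  have "{y, x} \<in> E" and "{z, x} \<in> E"
    using yz by (simp_all add: insert_commute)
  then have "depth x \<noteq> Suc (depth y) \<or> depth x \<noteq> Suc (depth z)"
    using parent_unique \<open>y \<noteq> z\<close> by blast
  then show ?thesis
    using depth_adjacent[OF yz(1)] depth_adjacent[OF yz(2)] yz(1,2) by blast
qed

definition child :: "'a \<Rightarrow> 'a" where
  "child x = (SOME y. {x, y} \<in> E \<and> depth y = Suc (depth x))"

lemma child:
  assumes "2 \<le> degree E x"
  shows "{x, child x} \<in> E" and "depth (child x) = Suc (depth x)"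
  using someI_ex[OF child_exists[OF assms]] unfolding child_def by blast+

lemma child_inj:
  assumes "2 \<le> degree E x" and "2 \<le> degree E y" and "child x = child y"
  shows "x = y"
proof -
  have "{x, child x} \<in> E" and "{y, child x} \<in> E"
    using child[OF assms(1)] child[OF assms(2)] assms(3) by simp_all
  then show ?thesis
    using parent_unique[of x "child x" y] child[OF assms(1)] child[OF assms(2)] assms(3)
    by (simp add: insert_commute)
qed

definition child_and_root_edges :: "'a set \<Rightarrow> 'a set set" where
  "child_and_root_edges A =
     (\<lambda>x. {x, child x}) ` (A - {r}) \<union> (\<lambda>y. {r, y}) ` {y. {r, y} \<in> E}"

context
  fixes A :: "'a set"
  assumes A_subset: "A \<subseteq> V" and root_in_A: "r \<in> A"
    and independent: "\<And>x y. x \<in> A \<Longrightarrow> y \<in> A \<Longrightarrow> {x, y} \<notin> E"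
    and degree_ge_2: "\<And>x. x \<in> A \<Longrightarrow> 2 \<le> degree E x"
begin

lemma child_notin: "x \<in> A \<Longrightarrow> child x \<notin> A"
  using child(1) degree_ge_2 independent by blast

lemma depth_child_ge_2: "x \<in> A - {r} \<Longrightarrow> 2 \<le> depth (child x)"
  using child(2) degree_ge_2 depth_eq_0_iff A_subset by fastforce

lemma root_neighbour: "{r, y} \<in> E \<Longrightarrow> y \<notin> A \<and> depth y = 1"
  using independent[OF root_in_A] depth_adjacent[of r y] depth_eq_0_iff[OF root_in_V] by auto

lemma child_edges_disjoint:
  "x \<in> A \<Longrightarrow> x' \<in> A \<Longrightarrow> x \<noteq> x' \<Longrightarrow> {x, child x} \<inter> {x', child x'} = {}"
  using child_notin child_inj degree_ge_2 by blast

lemma child_edge_disjoint_root_edge: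
  assumes "x \<in> A - {r}" and "{r, y} \<in> E"
  shows "{x, child x} \<inter> {r, y} = {}"
proof -
  have "child x \<noteq> y"
    using depth_child_ge_2[OF assms(1)] root_neighbour[OF assms(2)] by auto
  then show ?thesis
    using assms child_notin[of x] root_neighbour[OF assms(2)] root_in_A by auto
qed

lemma child_and_root_edges_subset: "child_and_root_edges A \<subseteq> E"
  using child(1) degree_ge_2 unfolding child_and_root_edges_def by auto

lemma child_and_root_edges_meet_at_root:
  "pairwise (\<lambda>e e'. e \<inter> e' \<subseteq> {r}) (child_and_root_edges A)"
proof (rule pairwiseI)
  fix e e'
  assume "e \<in> child_and_root_edges A" and "e' \<in> child_and_root_edges A" and "e \<noteq> e'"
  then consider
      x x' where "x \<in> A - {r}" "x' \<in> A - {r}" "e = {x, child x}" "e' = {x', child x'}"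
    | x y where "x \<in> A - {r}" "{r, y} \<in> E" "e = {x, child x}" "e' = {r, y}"
    | x y where "x \<in> A - {r}" "{r, y} \<in> E" "e = {r, y}" "e' = {x, child x}"
    | y y' where "e = {r, y}" "e' = {r, y'}"
    unfolding child_and_root_edges_def by blast
  then show "e \<inter> e' \<subseteq> {r}"
  proof cases
    case (1 x x')
    then have "x \<noteq> x'"
      using \<open>e \<noteq> e'\<close> by blast
    then show ?thesis
      using child_edges_disjoint 1 by simp
  next
    case (2 x y)
    then show ?thesis
      using child_edge_disjoint_root_edge[OF 2(1,2)] by simp
  next
    case (3 x y)
    then show ?thesis
      using child_edge_disjoint_root_edge[OF 3(1,2)] by blast
  qed (use \<open>e \<noteq> e'\<close> in auto)
qed

lemma card_child_and_root_edges: "card (child_and_root_edges A) = card A - 1 + degree E r"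
proof -
  let ?N = "{y. {r, y} \<in> E}"
  have "?N \<subseteq> V"
    using simple_graph_edgeD[OF simple] by blast
  then have "finite A" and "finite ?N"
    using A_subset simple finite_subset unfolding simple_graph_def by blast+
  moreover have "inj_on (\<lambda>x. {x, child x}) (A - {r})"
    using child_edges_disjoint by (intro inj_onI) blast
  moreover have "inj_on (\<lambda>y. {r, y}) ?N"
    by (intro inj_onI) (auto simp: doubleton_eq_iff)
  moreover have "(\<lambda>x. {x, child x}) ` (A - {r}) \<inter> (\<lambda>y. {r, y}) ` ?N = {}"
    using child_edge_disjoint_root_edge by blast
  ultimately show ?thesis
    using root_in_A unfolding child_and_root_edges_def degree_def
    by (simp add: card_Un_disjoint card_image)
qed

end

end

definition split_edge :: "'a set \<Rightarrow> 'a set \<Rightarrow> ('a \<times> 'a option) set" where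
  "split_edge U e = {split_vertex U x y | x y. e = {x, y}}"

lemma split_edge_doubleton: "split_edge U {x, y} = {split_vertex U x y, split_vertex U y x}"
  unfolding split_edge_def by (auto simp: doubleton_eq_iff)

lemma split_E_subset: "split_E E U \<subseteq> split_edge U ` E"
  unfolding split_E_def by (force simp flip: split_edge_doubleton)

lemma split_edge_in_split_E: "{x, y} \<in> E \<Longrightarrow> split_edge U {x, y} \<in> split_E E U"
  unfolding split_E_def split_edge_doubleton by blast

lemma split_edges_common_vertex:
  assumes "p \<in> split_edge U e" and "p \<in> split_edge U e'"
  shows "fst p \<in> e \<inter> e'" and "fst p \<in> U \<Longrightarrow> e = e'"
  using assms unfolding split_edge_def split_vertex_def by (auto split: if_splits)

lemma matching_split_edges:
  assumes "simple_graph V E" and "F \<subseteq> E" and meet: "pairwise (\<lambda>e e'. e \<inter> e' \<subseteq> U) F"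
  shows "is_matching (split_E E U) (split_edge U ` F)" and "card (split_edge U ` F) = card F"
proof -
  have disjoint: "split_edge U e \<inter> split_edge U e' = {}"
    if "e \<in> F" and "e' \<in> F" and "e \<noteq> e'" for e e'
  proof (rule equals0I)
    fix p assume p: "p \<in> split_edge U e \<inter> split_edge U e'"
    then have "fst p \<in> U"
      using meet that split_edges_common_vertex(1)[of p U e e'] unfolding pairwise_def by blast
    then show False
      using p that split_edges_common_vertex(2) by blast
  qed
  have in_split_E: "split_edge U e \<in> split_E E U" if "e \<in> F" for e
  proof -
    have "e \<in> E"
      using that \<open>F \<subseteq> E\<close> by blast
    with \<open>simple_graph V E\<close> show ?thesis
      by (metis simple_graph_edgeE split_edge_in_split_E)
  qed
  have "split_edge U e \<noteq> {}" if "e \<in> F" for e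
    using in_split_E[OF that] unfolding split_E_def by blast
  with disjoint have "inj_on (split_edge U) F"
    by (intro inj_onI) (metis Int_absorb)
  then show "card (split_edge U ` F) = card F"
    by (rule card_image)
  show "is_matching (split_E E U) (split_edge U ` F)"
    unfolding is_matching_def using in_split_E disjoint by auto
qed

lemma finite_split_E: "simple_graph V E \<Longrightarrow> finite (split_E E U)"
proof -
  assume "simple_graph V E"
  then have "E \<subseteq> Pow V" and "finite V"
    unfolding simple_graph_def by auto
  then have "finite (split_edge U ` E)"
    by (simp add: finite_subset)
  then show ?thesis
    by (rule finite_subset[OF split_E_subset])
qed

lemma card_le_matching_number:
  assumes "finite E" and "is_matching E M"
  shows "card M \<le> matching_number E"
proof -
  have "{card M | M. is_matching E M} \<subseteq> card ` Pow E"
    unfolding is_matching_def by auto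
  then have "finite {card M | M. is_matching E M}"
    using \<open>finite E\<close> finite_subset by blast
  then show ?thesis
    unfolding matching_number_def using assms(2) by (intro Max_ge) auto
qed

theorem lemma2p5:
  fixes V :: "'a set" and E :: "'a set set" and A B U :: "'a set" and k :: nat
  assumes "is_tree V E"
    and "colour_classes V E A B"
    and "card A \<le> card B"
    and "k = Min (degree E ` A)"
    and "k \<ge> 2"
    and "U \<subseteq> V"
    and "card (U \<inter> A) \<ge> 1"
  shows "matching_number (split_E E U) \<ge> card A - 1 + k"
proof -
  obtain v where "v \<in> U" and "v \<in> A"
    using assms(7) by (metis all_not_in_conv card.empty not_one_le_zero IntE)
  have "A \<subseteq> V" and indep: "\<And>x y. x \<in> A \<Longrightarrow> y \<in> A \<Longrightarrow> {x, y} \<notin> E"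
    using assms(2) unfolding colour_classes_def by blast+
  interpret rooted_tree V E v
    using assms(1) \<open>A \<subseteq> V\<close> \<open>v \<in> A\<close> by unfold_locales auto
  have "finite A"
    using simple \<open>A \<subseteq> V\<close> finite_subset unfolding simple_graph_def by blast
  then have k_le: "k \<le> degree E x" if "x \<in> A" for x
    using assms(4) that by simp
  then have deg: "2 \<le> degree E x" if "x \<in> A" for x
    using assms(5) that le_trans by blast
  note A_facts = \<open>A \<subseteq> V\<close> \<open>v \<in> A\<close> indep deg
  let ?F = "child_and_root_edges A"
  have "pairwise (\<lambda>e e'. e \<inter> e' \<subseteq> U) ?F"
    using child_and_root_edges_meet_at_root[OF A_facts] \<open>v \<in> U\<close>
    unfolding pairwise_def by blast
  then have "card ?F \<le> matching_number (split_E E U)"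
    using matching_split_edges[OF simple child_and_root_edges_subset[OF A_facts]]
      card_le_matching_number finite_split_E[OF simple]
    by metis
  then show ?thesis
    using card_child_and_root_edges[OF A_facts] k_le[OF \<open>v \<in> A\<close>]
    by linarith
qed

end
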